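(* Consider an instance of the bipartite stable $b$-matching problem with bipartite graph $G=(U\cup W,E)$, preference lists $L$ and quota function $b$. Let $M_1$ be a $b$-matching with set of blocking pairs $B_1$, and let $(u,w)\in B_1$. Remove the blocking pair $(u,w)$ as follows: if $u$ is full in $M_1$, disconnect $u$ from a worst partner $w'$ of $u$; if $w$ is full in $M_1$, disconnect $w$ from a worst partner $u'$ of $w$; then add the edge $(u,w)$. Call the resulting $b$-matching $M_2$ and its set of blocking pairs $B_2$ (if nothing is disconnected from $u$, $w'$ is undefined; if nothing is disconnected from $w$, $u'$ is undefined). If $B_2\setminus B_1\neq\varnothing$, then at least one of $u'$, $w'$ exists, and every blocking pair in $B_2\setminus B_1$ involves $u'$ or $w'$.
   Context: An instance consists of an undirected bipartite graph $G=(V,E)$ with $V=U\cup W$ ($U,W$ disjoint), a quota function $b:V\to\mathbb{N}$, and for each agent $v\in V$ a preference list $L_v$ over the agents adjacent to $v$ (its candidates); $r_v(x)$ denotes the rank of $x$ in $v$'s list (smaller is better). A $b$-matching $M\subseteq E$ is a set of edges such that each $v$ lies in at most $b(v)$ edges of $M$; $M(v)$ is the set of partners of $v$; $v$ is full if $|M(v)|=b(v)$ and free otherwise; a worst partner of $v$ is an $x\in M(v)$ with $r_v(x)=\max\{r_v(y): y\in M(v)\}$. A pair $(u,w)$ is a blocking pair of $M$ if (i) $u\in L_w$, $w\in L_u$ and $(u,w)\notin M$; (ii) $u$ is free or strictly prefers $w$ to its worst partner in $M$; (iii) $w$ is free or strictly prefers $u$ to its worst partner in $M$. *)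

theory Defs
  imports Main
begin

definition bip_instance ::
  "'a set \<Rightarrow> 'a set \<Rightarrow> ('a \<times> 'a) set \<Rightarrow> ('a \<Rightarrow> nat) \<Rightarrow> ('a \<Rightarrow> 'a list) \<Rightarrow> bool" where
  "bip_instance U W E b L \<longleftrightarrow>
     finite U \<and> finite W \<and> U \<inter> W = {} \<and> E \<subseteq> U \<times> W \<and>
     (\<forall>v \<in> U \<union> W. distinct (L v)) \<and>
     (\<forall>u \<in> U. set (L u) = {w. (u, w) \<in> E}) \<and>
     (\<forall>w \<in> W. set (L w) = {u. (u, w) \<in> E})"

text \<open>Rank of x in v's list (position, smaller is better).\<close>
definition rank :: "('a \<Rightarrow> 'a list) \<Rightarrow> 'a \<Rightarrow> 'a \<Rightarrow> nat" where
  "rank L v x = (LEAST i. i < length (L v) \<and> L v ! i = x)"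

definition partners :: "('a \<times> 'a) set \<Rightarrow> 'a \<Rightarrow> 'a set" where
  "partners M v = {x. (v, x) \<in> M \<or> (x, v) \<in> M}"

definition b_matching :: "('a \<times> 'a) set \<Rightarrow> ('a \<Rightarrow> nat) \<Rightarrow> ('a \<times> 'a) set \<Rightarrow> bool" where
  "b_matching E b M \<longleftrightarrow> M \<subseteq> E \<and> (\<forall>v. card (partners M v) \<le> b v)"

definition full :: "('a \<Rightarrow> nat) \<Rightarrow> ('a \<times> 'a) set \<Rightarrow> 'a \<Rightarrow> bool" where
  "full b M v \<longleftrightarrow> card (partners M v) = b v"

definition worst_partner :: "('a \<Rightarrow> 'a list) \<Rightarrow> ('a \<times> 'a) set \<Rightarrow> 'a \<Rightarrow> 'a \<Rightarrow> bool" where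
  "worst_partner L M v x \<longleftrightarrow> x \<in> partners M v \<and> (\<forall>y \<in> partners M v. rank L v y \<le> rank L v x)"

definition wants :: "('a \<Rightarrow> 'a list) \<Rightarrow> ('a \<Rightarrow> nat) \<Rightarrow> ('a \<times> 'a) set \<Rightarrow> 'a \<Rightarrow> 'a \<Rightarrow> bool" where
  "wants L b M v y \<longleftrightarrow> \<not> full b M v \<or> (\<exists>x. worst_partner L M v x \<and> rank L v y < rank L v x)"

definition blocking_pairs ::
  "'a set \<Rightarrow> 'a set \<Rightarrow> ('a \<Rightarrow> 'a list) \<Rightarrow> ('a \<Rightarrow> nat) \<Rightarrow> ('a \<times> 'a) set \<Rightarrow> ('a \<times> 'a) set" where
  "blocking_pairs U W L b M =
     {(u, w). u \<in> U \<and> w \<in> W \<and> u \<in> set (L w) \<and> w \<in> set (L u) \<and> (u, w) \<notin> M \<and>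
              wants L b M u w \<and> wants L b M w u}"

end

theory Submission
  imports Defs
begin

text \<open>Only the agents that lose a partner, u' and w', can start to want someone new.
  Every other agent either keeps its partner set, or was not full in M1 (and so already
  wanted everybody), or is u or w, which exchange a worst partner for a strictly better
  one. In each case an agent that wants y in M2 already wanted y in M1, so a blocking pair
  of M2 avoiding u' and w' was blocking in M1 as well.\<close>

lemma finite_partners: "finite M \<Longrightarrow> finite (partners M v)"
proof -
  assume "finite M"
  moreover have "partners M v \<subseteq> fst ` M \<union> snd ` M"
    unfolding partners_def by force
  ultimately show ?thesis
    by (meson finite_Un finite_imageI finite_subset)
qed

lemma partners_left:
  "M \<subseteq> U \<times> W \<Longrightarrow> U \<inter> W = {} \<Longrightarrow> x \<in> U \<Longrightarrow> partners M x = {z. (x, z) \<in> M}"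
  unfolding partners_def by blast

lemma partners_right:
  "M \<subseteq> U \<times> W \<Longrightarrow> U \<inter> W = {} \<Longrightarrow> y \<in> W \<Longrightarrow> partners M y = {z. (z, y) \<in> M}"
  unfolding partners_def by blast

lemma worst_partner_rank_eq:
  "worst_partner L M v a \<Longrightarrow> worst_partner L M v x \<Longrightarrow> rank L v a = rank L v x"
  unfolding worst_partner_def by (meson antisym)

lemma wants_cong: "partners M v = partners M' v \<Longrightarrow> wants L b M v y = wants L b M' v y"
  unfolding wants_def full_def worst_partner_def by simp

lemma wants_if_wants_after_exchange:
  assumes fin: "finite (partners M v)"
    and wants_c: "wants L b M v c" and c_new: "c \<notin> partners M v"
    and worst: "full b M v \<Longrightarrow> worst_partner L M v a"
    and exchange: "full b M v \<Longrightarrow> partners M' v = insert c (partners M v - {a})"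
    and wants_y: "wants L b M' v y"
  shows "wants L b M v y"
proof (cases "full b M v")
  case False
  then show ?thesis unfolding wants_def by simp
next
  case True
  have a: "worst_partner L M v a" using worst True .
  then have "a \<in> partners M v" unfolding worst_partner_def by simp
  then have "card (partners M' v) = card (partners M v)"
    using exchange[OF True] c_new fin by (simp add: card_Suc_Diff1 del: card_Diff_insert)
  then have "full b M' v" using True unfolding full_def by simp
  then obtain z where z: "worst_partner L M' v z" "rank L v y < rank L v z"
    using wants_y unfolding wants_def by blast
  obtain x where "worst_partner L M v x" "rank L v c < rank L v x"
    using wants_c True unfolding wants_def by blast
  then have "rank L v c < rank L v a" using worst_partner_rank_eq[OF a] by simp
  moreover have "z \<in> insert c (partners M v - {a})"
    using z(1) exchange[OF True] unfolding worst_partner_def by simp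
  ultimately have "rank L v z \<le> rank L v a" using a unfolding worst_partner_def by auto
  then show ?thesis using z(2) a unfolding wants_def by (meson order_less_le_trans)
qed

locale blocking_pair_removal =
  fixes U W :: "'a set" and E M1 M2 :: "('a \<times> 'a) set" and b :: "'a \<Rightarrow> nat"
    and L :: "'a \<Rightarrow> 'a list" and u w :: 'a and u' w' :: "'a option"
  assumes inst: "bip_instance U W E b L"
    and M1: "b_matching E b M1"
    and uw: "(u, w) \<in> blocking_pairs U W L b M1"
    and w'_None_iff: "w' = None \<longleftrightarrow> \<not> full b M1 u"
    and w'_worst: "\<And>x. w' = Some x \<Longrightarrow> worst_partner L M1 u x"
    and u'_None_iff: "u' = None \<longleftrightarrow> \<not> full b M1 w"
    and u'_worst: "\<And>x. u' = Some x \<Longrightarrow> worst_partner L M1 w x"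
    and M2: "M2 = (M1 - {(u, x) | x. w' = Some x} - {(x, w) | x. u' = Some x}) \<union> {(u, w)}"
begin

lemma disjoint: "U \<inter> W = {}"
  using inst unfolding bip_instance_def by simp

lemma M1_bipartite: "M1 \<subseteq> U \<times> W"
  using inst M1 unfolding bip_instance_def b_matching_def by blast

lemma finite_M1: "finite M1"
  using inst M1_bipartite unfolding bip_instance_def by (meson finite_SigmaI finite_subset)

lemma uw_facts: "u \<in> U" "w \<in> W" "(u, w) \<notin> M1" "wants L b M1 u w" "wants L b M1 w u"
  using uw unfolding blocking_pairs_def by auto

lemma M2_bipartite: "M2 \<subseteq> U \<times> W"
  using M1_bipartite uw_facts M2 by blast

lemma partners_M2_left:
  assumes "x \<in> U" "u' \<noteq> Some x"
  shows "partners M2 x = (if x = u then insert w (partners M1 u - set_option w') else partners M1 x)"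
  unfolding partners_left[OF M2_bipartite disjoint assms(1)]
    partners_left[OF M1_bipartite disjoint assms(1)] partners_left[OF M1_bipartite disjoint uw_facts(1)]
  using assms M2 by auto

lemma partners_M2_right:
  assumes "y \<in> W" "w' \<noteq> Some y"
  shows "partners M2 y = (if y = w then insert u (partners M1 w - set_option u') else partners M1 y)"
  unfolding partners_right[OF M2_bipartite disjoint assms(1)]
    partners_right[OF M1_bipartite disjoint assms(1)] partners_right[OF M1_bipartite disjoint uw_facts(2)]
  using assms M2 by auto

lemma wants_M1_if_wants_M2_left:
  assumes x: "x \<in> U" "u' \<noteq> Some x" and wants_y: "wants L b M2 x y"
  shows "wants L b M1 x y"
proof (cases "x = u")
  case True
  have "w \<notin> partners M1 u"
    unfolding partners_left[OF M1_bipartite disjoint uw_facts(1)] using uw_facts(3) by simp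
  with True show ?thesis
    using wants_if_wants_after_exchange[OF finite_partners[OF finite_M1] uw_facts(4), of "the w'"]
      wants_y partners_M2_left[OF x] w'_None_iff w'_worst by force
next
  case False
  then show ?thesis using wants_y partners_M2_left[OF x] wants_cong by metis
qed

lemma wants_M1_if_wants_M2_right:
  assumes y: "y \<in> W" "w' \<noteq> Some y" and wants_x: "wants L b M2 y x"
  shows "wants L b M1 y x"
proof (cases "y = w")
  case True
  have "u \<notin> partners M1 w"
    unfolding partners_right[OF M1_bipartite disjoint uw_facts(2)] using uw_facts(3) by simp
  with True show ?thesis
    using wants_if_wants_after_exchange[OF finite_partners[OF finite_M1] uw_facts(5), of "the u'"]
      wants_x partners_M2_right[OF y] u'_None_iff u'_worst by force
next
  case False
  then show ?thesis using wants_x partners_M2_right[OF y] wants_cong by metis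
qed

lemma new_blocking_pair_involves_u'_or_w':
  assumes new: "(x, y) \<in> blocking_pairs U W L b M2" "(x, y) \<notin> blocking_pairs U W L b M1"
  shows "u' = Some x \<or> w' = Some y"
proof (rule ccontr)
  assume "\<not> ?thesis"
  with new(1) have x: "x \<in> U" "u' \<noteq> Some x" and y: "y \<in> W" "w' \<noteq> Some y"
    unfolding blocking_pairs_def by auto
  have "(x, y) \<notin> M1" using new(1) x(2) y(2) M2 unfolding blocking_pairs_def by auto
  then show False
    using new wants_M1_if_wants_M2_left[OF x] wants_M1_if_wants_M2_right[OF y]
    unfolding blocking_pairs_def by auto
qed

end

theorem proposition2:
  fixes U W :: "'a set" and E M1 M2 :: "('a \<times> 'a) set" and b :: "'a \<Rightarrow> nat"
    and L :: "'a \<Rightarrow> 'a list" and u w :: 'a and u' w' :: "'a option"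
  assumes inst: "bip_instance U W E b L"
    and M1: "b_matching E b M1"
    and uw: "(u, w) \<in> blocking_pairs U W L b M1"
    and w'_def: "w' = None \<longleftrightarrow> \<not> full b M1 u"
    and w'_worst: "\<And>x. w' = Some x \<Longrightarrow> worst_partner L M1 u x"
    and u'_def: "u' = None \<longleftrightarrow> \<not> full b M1 w"
    and u'_worst: "\<And>x. u' = Some x \<Longrightarrow> worst_partner L M1 w x"
    and M2: "M2 = (M1 - {(u, x) | x. w' = Some x} - {(x, w) | x. u' = Some x}) \<union> {(u, w)}"
    and new: "blocking_pairs U W L b M2 - blocking_pairs U W L b M1 \<noteq> {}"
  shows "(u' \<noteq> None \<or> w' \<noteq> None) \<and>
         (\<forall>(x, y) \<in> blocking_pairs U W L b M2 - blocking_pairs U W L b M1.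
            (\<exists>z. u' = Some z \<and> z \<in> {x, y}) \<or> (\<exists>z. w' = Some z \<and> z \<in> {x, y}))"
proof -
  interpret blocking_pair_removal U W E M1 M2 b L u w u' w'
    using assms by unfold_locales
  show ?thesis
    using new new_blocking_pair_involves_u'_or_w' by fast
qed

end
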